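(* Let $\Sigma=(\mathbb{N}_0,X,U,\mathscr{U},\phi)$ be a control system as in the standing setup and let $Q\subset X$ be a control set. If $\mathrm{EIM}_k(Q)\cap\operatorname{Int}(Q)\ne\emptyset$ for some $k\in\mathbb N$, then $\mathrm{EIM}_k(Q)=Q$.
   Context: Standing setup: $(X,d)$ is a metric space, $U$ is a compact metric space, and $F:X\times U\to X$ is a map such that $F_u:=F(\cdot,u)$ is continuous for every $u\in U$. Let $\mathscr U=U^{\mathbb N_0}$ with the product topology. For $\omega=(\omega_0,\omega_1,\dots)\in\mathscr U$, $x\in X$, set $\phi(0,x,\omega)=x$ and $\phi(k,x,\omega)=F_{\omega_{k-1}}\circ\cdots\circ F_{\omega_0}(x)$ for $k\ge1$. It is assumed that $\phi:\mathbb N_0\times X\times\mathscr U\to X$ is continuous. Notation: $\mathbb N=\{1,2,\dots\}$; $B(x,\delta)$ is the open ball; $d(y,Q)=\inf_{q\in Q}d(y,q)$; $\operatorname{Int}(Q)$ is the interior of $Q$ in $X$. Control set: $D\subset X$ is a control set if (i) for every $x\in D$ there is $\omega\in\mathscr U$ with $\phi(k,x,\omega)\in D$ for all $k\in\mathbb N_0$; (ii) for every $x\in D$, $D\subset\operatorname{cl}\mathcal O^+(x)$, where $\mathcal O^+(x)=\{\phi(m,x,\omega):m\in\mathbb N_0,\omega\in\mathscr U\}$; (iii) $D$ is maximal with (i) and (ii). For $k\in\mathbb N$: $\mathrm{EIM}_k(Q)$ is the set of $x\in Q$ for which there exist $\delta>0$ and $\omega\in\mathscr U$ such that $\frac1n\sum_{i=0}^{n-1}d(\phi(i,y,\omega),Q)<\frac1k$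 for all $n\in\mathbb N$ and all $y\in B(x,\delta)\cap Q$. *)

theory Defs
  imports "HOL-Analysis.Analysis"
begin

text \<open>Trajectory: phi F k x w = F_{w (k-1)} o ... o F_{w 0} (x).
  The control space is the type nat => 'u with its product topology.\<close>
primrec phi :: "('x \<Rightarrow> 'u \<Rightarrow> 'x) \<Rightarrow> nat \<Rightarrow> 'x \<Rightarrow> (nat \<Rightarrow> 'u) \<Rightarrow> 'x" where
  "phi F 0 x w = x"
| "phi F (Suc k) x w = F (phi F k x w) (w k)"

definition orbit_plus :: "('x \<Rightarrow> 'u \<Rightarrow> 'x) \<Rightarrow> 'x \<Rightarrow> 'x set" where
  "orbit_plus F x = {phi F m x w | m w. True}"

definition ctrl_pre :: "('x::topological_space \<Rightarrow> 'u \<Rightarrow> 'x) \<Rightarrow> 'x set \<Rightarrow> bool" where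
  "ctrl_pre F D \<longleftrightarrow>
     (\<forall>x\<in>D. \<exists>w. \<forall>k. phi F k x w \<in> D) \<and>
     (\<forall>x\<in>D. D \<subseteq> closure (orbit_plus F x))"

definition control_set :: "('x::topological_space \<Rightarrow> 'u \<Rightarrow> 'x) \<Rightarrow> 'x set \<Rightarrow> bool" where
  "control_set F D \<longleftrightarrow> ctrl_pre F D \<and> (\<forall>D'. D \<subseteq> D' \<and> ctrl_pre F D' \<longrightarrow> D' = D)"

definition EIM :: "('x::metric_space \<Rightarrow> 'u \<Rightarrow> 'x) \<Rightarrow> nat \<Rightarrow> 'x set \<Rightarrow> 'x set" where
  "EIM F k Q = {x \<in> Q. \<exists>\<delta>>0. \<exists>w. \<forall>n\<ge>1. \<forall>y \<in> ball x \<delta> \<inter> Q.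
      (\<Sum>i<n. infdist (phi F i y w) Q) / real n < 1 / real k}"

end

theory Submission
  imports Defs
begin

text \<open>Fix a point x0 of EIM_k(Q) in the interior of Q, with radius and control w0 as in the
  definition. Any x in Q has x0 in the closure of its orbit, so some trajectory from x enters a small
  ball around x0 inside Q, and by continuity the same finite control steers a whole neighbourhood
  of x into that ball. Maximality of the control set Q forces these finite trajectory pieces to stay
  in Q, so they contribute nothing to the averaged distance to Q; following them by w0 shows that
  x is in EIM_k(Q).\<close>

definition ctrl_append :: "nat \<Rightarrow> (nat \<Rightarrow> 'u) \<Rightarrow> (nat \<Rightarrow> 'u) \<Rightarrow> nat \<Rightarrow> 'u" where
  "ctrl_append m w v = (\<lambda>t. if t < m then w t else v (t - m))"

lemma phi_cong_prefix: "(\<And>t. t < i \<Longrightarrow> v t = w t) \<Longrightarrow> phi F i x v = phi F i x w"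
  by (induction i) auto

lemma phi_add: "phi F j (phi F i x v) (\<lambda>t. v (t + i)) = phi F (i + j) x v"
  by (induction j) (auto simp: add.commute)

lemma phi_ctrl_append_le: "j \<le> m \<Longrightarrow> phi F j x (ctrl_append m w v) = phi F j x w"
  by (rule phi_cong_prefix) (simp add: ctrl_append_def)

lemma phi_ctrl_append_add: "phi F (m + j) x (ctrl_append m w v) = phi F j (phi F m x w) v"
  by (induction j) (simp_all add: phi_ctrl_append_le, simp add: ctrl_append_def)

lemma continuous_on_phi:
  assumes "\<And>u. continuous_on UNIV (\<lambda>x. F x u)"
  shows "continuous_on UNIV (\<lambda>x. phi F m x w)"
proof (induction m)
  case 0
  then show ?case by (simp add: continuous_on_id)
next
  case (Suc m)
  have "continuous_on UNIV ((\<lambda>x. F x (w m)) \<circ> (\<lambda>x. phi F m x w))"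
    by (rule continuous_on_compose[OF Suc]) (use assms continuous_on_subset in blast)
  then show ?case by (simp add: o_def)
qed

lemma phi_in_orbit_plus: "phi F m x w \<in> orbit_plus F x"
  unfolding orbit_plus_def by blast

lemma orbit_plus_trans: "p \<in> orbit_plus F x \<Longrightarrow> orbit_plus F p \<subseteq> orbit_plus F x"
proof
  fix q assume "p \<in> orbit_plus F x" "q \<in> orbit_plus F p"
  then obtain i v j w where "p = phi F i x v" "q = phi F j p w"
    unfolding orbit_plus_def by blast
  then have "q = phi F (i + j) x (ctrl_append i v w)"
    by (simp add: phi_ctrl_append_add)
  then show "q \<in> orbit_plus F x" by (simp add: phi_in_orbit_plus)
qed

lemma closure_orbit_plus_trans:
  assumes cF: "\<And>u. continuous_on UNIV (\<lambda>x. F x u)"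
    and b: "b \<in> closure (orbit_plus F c)"
  shows "closure (orbit_plus F b) \<subseteq> closure (orbit_plus F c)"
proof (rule closure_minimal)
  show "orbit_plus F b \<subseteq> closure (orbit_plus F c)"
  proof
    fix q assume "q \<in> orbit_plus F b"
    then obtain m w where q: "q = phi F m b w" unfolding orbit_plus_def by blast
    have "(\<lambda>x. phi F m x w) ` orbit_plus F c \<subseteq> closure (orbit_plus F c)"
      using orbit_plus_trans phi_in_orbit_plus closure_subset by fast
    then have "(\<lambda>x. phi F m x w) ` closure (orbit_plus F c) \<subseteq> closure (orbit_plus F c)"
      using image_closure_subset continuous_on_subset[OF continuous_on_phi[of F, OF cF]]
      by (metis closed_closure subset_UNIV)
    then show "q \<in> closure (orbit_plus F c)" using b q by blast
  qed
qed simp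

lemma Un_trajectory_invariant:
  assumes stay: "\<forall>x\<in>Q. \<exists>v. \<forall>k. phi F k x v \<in> Q"
    and z: "phi F m y w \<in> Q" and p: "p \<in> Q \<union> (\<lambda>i. phi F i y w) ` {..m}"
  shows "\<exists>u. \<forall>k. phi F k p u \<in> Q \<union> (\<lambda>i. phi F i y w) ` {..m}"
proof -
  let ?D = "Q \<union> (\<lambda>i. phi F i y w) ` {..m}"
  from p consider "p \<in> Q" | j where "j \<le> m" "p = phi F j y w" by blast
  then show ?thesis
  proof cases
    case 1
    then show ?thesis using stay by blast
  next
    case 2
    obtain w2 where w2: "\<And>k. phi F k (phi F m y w) w2 \<in> Q" using stay z by blast
    define v where "v = ctrl_append m w w2"
    have "phi F k p (\<lambda>t. v (t + j)) \<in> ?D" for k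
    proof (cases "j + k \<le> m")
      case True
      then show ?thesis
        using 2 phi_add[of F k j y v] by (simp add: v_def phi_ctrl_append_le)
    next
      case False
      then have "phi F k p (\<lambda>t. v (t + j)) = phi F (j + k - m) (phi F m y w) w2"
        using 2 phi_add[of F k j y v] phi_ctrl_append_add[of F m "j + k - m" y w w2]
        by (simp add: v_def phi_ctrl_append_le)
      then show ?thesis using w2 by simp
    qed
    then show ?thesis by blast
  qed
qed

lemma Un_trajectory_subset_closure_orbit_plus:
  assumes cF: "\<And>u. continuous_on UNIV (\<lambda>x. F x u)"
    and reach: "\<forall>x\<in>Q. Q \<subseteq> closure (orbit_plus F x)"
    and y: "y \<in> Q" and z: "phi F m y w \<in> Q" and p: "p \<in> Q \<union> (\<lambda>i. phi F i y w) ` {..m}"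
  shows "Q \<union> (\<lambda>i. phi F i y w) ` {..m} \<subseteq> closure (orbit_plus F p)"
proof -
  let ?z = "phi F m y w"
  have "y \<in> closure (orbit_plus F ?z)" using reach y z by blast
  then have "(\<lambda>i. phi F i y w) ` {..m} \<subseteq> closure (orbit_plus F ?z)"
    using closure_orbit_plus_trans[of F, OF cF] phi_in_orbit_plus closure_subset by fast
  then have reach_z: "Q \<union> (\<lambda>i. phi F i y w) ` {..m} \<subseteq> closure (orbit_plus F ?z)"
    using reach z by blast
  from p consider "p \<in> Q" | j where "j \<le> m" "p = phi F j y w" by blast
  then have "?z \<in> closure (orbit_plus F p)"
  proof cases
    case 1
    then show ?thesis using reach z by blast
  next
    case 2
    then have "?z = phi F (m - j) p (\<lambda>t. w (t + j))"
      using phi_add[of F "m - j" j y w] by simp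
    then show ?thesis by (metis phi_in_orbit_plus closure_subset subsetD)
  qed
  then show ?thesis using reach_z closure_orbit_plus_trans[of F, OF cF] by blast
qed

text \<open>Each point of a finite trajectory piece from y to z in Q is approximately reachable from z
  and approximately reaches z, so maximality absorbs the piece into Q.\<close>

lemma ctrl_pre_Un_trajectory:
  assumes cF: "\<And>u. continuous_on UNIV (\<lambda>x. F x u)"
    and pre: "ctrl_pre F Q" and y: "y \<in> Q" and z: "phi F m y w \<in> Q"
  shows "ctrl_pre F (Q \<union> (\<lambda>i. phi F i y w) ` {..m})"
  using pre Un_trajectory_invariant[OF _ z] Un_trajectory_subset_closure_orbit_plus[of F, OF cF _ y z]
  unfolding ctrl_pre_def by blast

lemma control_set_trajectory_between:
  assumes cF: "\<And>u. continuous_on UNIV (\<lambda>x. F x u)"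
    and cs: "control_set F Q" and y: "y \<in> Q" and z: "phi F m y w \<in> Q" and i: "i \<le> m"
  shows "phi F i y w \<in> Q"
proof -
  have "ctrl_pre F Q" using cs unfolding control_set_def by blast
  then have "Q \<union> (\<lambda>i. phi F i y w) ` {..m} = Q"
    using cs ctrl_pre_Un_trajectory[of F, OF cF _ y z] unfolding control_set_def by blast
  then show ?thesis using i by blast
qed

lemma average_lt_if_prefix_zero:
  fixes f :: "nat \<Rightarrow> real"
  assumes zero: "\<And>i. i < m \<Longrightarrow> f i = 0"
    and tail: "\<And>j. j \<ge> 1 \<Longrightarrow> (\<Sum>i<j. f (m + i)) / real j < c"
    and c: "c > 0" and n: "n \<ge> 1"
  shows "(\<Sum>i<n. f i) / real n < c"
proof (cases "n \<le> m")
  case True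
  then show ?thesis using zero c by simp
next
  case False
  define j where "j = n - m"
  have j: "n = m + j" "j \<ge> 1" using False by (auto simp: j_def)
  have "(\<Sum>i<m + j. f i) = (\<Sum>i<m. f i) + (\<Sum>i<j. f (m + i))"
    by (induction j) auto
  then have "(\<Sum>i<n. f i) = (\<Sum>i<j. f (m + i))"
    using zero j(1) by simp
  also have "\<dots> < real j * c" using tail[OF j(2)] j(2) by (simp add: divide_simps mult.commute)
  also have "\<dots> \<le> real n * c" using j c by simp
  finally show ?thesis using n by (simp add: divide_simps mult.commute)
qed

lemma average_infdist_ctrl_append_lt:
  assumes cF: "\<And>u. continuous_on UNIV (\<lambda>x. F x u)"
    and cs: "control_set F Q" and k: "k \<ge> 1"
    and w0: "\<forall>n\<ge>1. \<forall>y \<in> ball x0 \<delta> \<inter> Q.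
      (\<Sum>i<n. infdist (phi F i y w0) Q) / real n < 1 / real k"
    and y: "y \<in> Q" and steer: "phi F m y w \<in> ball x0 \<delta> \<inter> Q" and n: "n \<ge> 1"
  shows "(\<Sum>i<n. infdist (phi F i y (ctrl_append m w w0)) Q) / real n < 1 / real k"
proof (rule average_lt_if_prefix_zero[OF _ _ _ n])
  fix i assume "i < m"
  then have "phi F i y w \<in> Q"
    using control_set_trajectory_between[of F, OF cF cs y, of m w i] steer by simp
  then show "infdist (phi F i y (ctrl_append m w w0)) Q = 0"
    using \<open>i < m\<close> by (simp add: phi_ctrl_append_le infdist_zero)
next
  fix j :: nat assume "j \<ge> 1"
  then show "(\<Sum>i<j. infdist (phi F (m + i) y (ctrl_append m w w0)) Q) / real j < 1 / real k"
    using w0 steer by (simp add: phi_ctrl_append_add)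
qed (use k in simp)

lemma mem_EIM_if_EIM_meets_interior:
  assumes cF: "\<And>u. continuous_on UNIV (\<lambda>x. F x u)"
    and cs: "control_set F Q" and k: "k \<ge> 1"
    and x0: "x0 \<in> EIM F k Q \<inter> interior Q" and x: "x \<in> Q"
  shows "x \<in> EIM F k Q"
proof -
  obtain \<delta> w0 where "\<delta> > 0" and w0: "\<forall>n\<ge>1. \<forall>y \<in> ball x0 \<delta> \<inter> Q.
      (\<Sum>i<n. infdist (phi F i y w0) Q) / real n < 1 / real k"
    using x0 unfolding EIM_def by blast
  obtain r0 where "r0 > 0" and r0: "ball x0 r0 \<subseteq> Q"
    using x0 mem_interior by blast
  define r where "r = min r0 \<delta>"
  have "r > 0" using \<open>r0 > 0\<close> \<open>\<delta> > 0\<close> by (simp add: r_def)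
  have r: "ball x0 r \<subseteq> ball x0 \<delta> \<inter> Q"
    using r0 by (auto simp: r_def)
  have "x0 \<in> closure (orbit_plus F x)"
    using cs x x0 unfolding control_set_def ctrl_pre_def EIM_def by blast
  then obtain m w where "phi F m x w \<in> ball x0 r"
    using \<open>r > 0\<close> unfolding orbit_plus_def closure_approachable by (auto simp: dist_commute)
  moreover have "open ((\<lambda>y. phi F m y w) -` ball x0 r)"
    using continuous_on_phi[of F, OF cF] by (simp add: continuous_on_open_vimage)
  ultimately obtain d where "d > 0" and "ball x d \<subseteq> (\<lambda>y. phi F m y w) -` ball x0 r"
    by (auto elim: openE)
  then have d: "phi F m y w \<in> ball x0 r" if "y \<in> ball x d" for y
    using that by blast
  have "(\<Sum>i<n. infdist (phi F i y (ctrl_append m w w0)) Q) / real n < 1 / real k"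
    if "n \<ge> 1" "y \<in> ball x d \<inter> Q" for n y
    using that average_infdist_ctrl_append_lt[of F, OF cF cs k w0] d r by blast
  then show ?thesis
    unfolding EIM_def using x \<open>d > 0\<close> by blast
qed

theorem mainTheorem5:
  fixes F :: "'x::metric_space \<Rightarrow> 'u::metric_space \<Rightarrow> 'x"
    and Q :: "'x set" and k :: nat
  assumes "compact (UNIV :: 'u set)"
    and cF: "\<And>u. continuous_on UNIV (\<lambda>x. F x u)"
    and "continuous_on UNIV (\<lambda>(m, x, w). phi F m x w)"
    and cs: "control_set F Q"
    and k: "k \<ge> 1"
    and meets: "EIM F k Q \<inter> interior Q \<noteq> {}"
  shows "EIM F k Q = Q"
proof
  show "EIM F k Q \<subseteq> Q" unfolding EIM_def by blast
  obtain x0 where "x0 \<in> EIM F k Q \<inter> interior Q" using meets by blast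
  then show "Q \<subseteq> EIM F k Q"
    using mem_EIM_if_EIM_meets_interior[of F, OF cF cs k] by blast
qed

end
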